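(* For every integer $r\ge 0$, $\mathrm{LCD}[6r+5,2] < 4r+3$.
   Context: All codes are binary linear codes, i.e. subspaces of $\mathbb{F}_2^n$; an $[n,k,d]$ code is one of length $n$, dimension $k$ and minimum Hamming distance $d$. A linear code $C$ is an LCD code if $C\cap C^\perp=\{0\}$, where $C^\perp$ is the dual with respect to the standard dot product. For positive integers $n\ge k$, $\mathrm{LCD}[n,k]$ denotes the largest $d$ such that there exists a binary $[n,k,d]$ LCD code. *)

theory Defs
  imports Main
begin

text \<open>Vectors of F_2^n are represented as bool lists of length n (True = 1, False = 0).\<close>

definition vadd :: "bool list \<Rightarrow> bool list \<Rightarrow> bool list" where
  "vadd u v = map2 (\<noteq>) u v"

definition zero_vec :: "nat \<Rightarrow> bool list" where
  "zero_vec n = replicate n False"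

definition dot :: "bool list \<Rightarrow> bool list \<Rightarrow> bool" where
  "dot u v = odd (length (filter id (map2 (\<and>) u v)))"

definition hamming_dist :: "bool list \<Rightarrow> bool list \<Rightarrow> nat" where
  "hamming_dist u v = length (filter id (map2 (\<noteq>) u v))"

text \<open>A binary linear code of length n: a subspace of F_2^n (over F_2, closure
  under addition and containing 0 is exactly being a subspace).\<close>
definition linear_code :: "nat \<Rightarrow> bool list set \<Rightarrow> bool" where
  "linear_code n C \<longleftrightarrow> C \<subseteq> {v. length v = n} \<and> zero_vec n \<in> C \<and>
     (\<forall>u\<in>C. \<forall>v\<in>C. vadd u v \<in> C)"

definition dual_code :: "nat \<Rightarrow> bool list set \<Rightarrow> bool list set" where
  "dual_code n C = {v. length v = n \<and> (\<forall>c\<in>C. \<not> dot v c)}"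

definition min_dist :: "bool list set \<Rightarrow> nat" where
  "min_dist C = Min {hamming_dist u v | u v. u \<in> C \<and> v \<in> C \<and> u \<noteq> v}"

text \<open>An [n,k,d] binary linear code. Dimension k of a binary subspace is
  expressed via its cardinality 2^k.\<close>
definition nkd_code :: "nat \<Rightarrow> nat \<Rightarrow> nat \<Rightarrow> bool list set \<Rightarrow> bool" where
  "nkd_code n k d C \<longleftrightarrow> linear_code n C \<and> card C = 2 ^ k \<and> min_dist C = d"

definition is_LCD :: "nat \<Rightarrow> bool list set \<Rightarrow> bool" where
  "is_LCD n C \<longleftrightarrow> C \<inter> dual_code n C = {zero_vec n}"

definition LCD_max :: "nat \<Rightarrow> nat \<Rightarrow> nat" where
  "LCD_max n k = (GREATEST d. \<exists>C. nkd_code n k d C \<and> is_LCD n C)"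

end

theory Submission
  imports Defs
begin

text \<open>A binary [n,2] code is spanned by two codewords a, b, and it is LCD exactly when its
  Gram matrix over F_2 is nonsingular, i.e. when |a| |b| + |a \<inter> b| is odd (weights |a|, |b|
  and the overlap |a \<inter> b| of the supports). The three nonzero weights |a|, |b| and
  |a| + |b| - 2 |a \<inter> b| add up to 2 |a \<union> b| \<le> 2n. For n = 6r + 5 and minimum distance at
  least 4r + 3 this forces the supports to cover all coordinates and the weights to be
  4r + 3, 4r + 3, 4r + 4 in some order; in each case the determinant is even.\<close>

definition weight :: "bool list \<Rightarrow> nat" where
  "weight v = length (filter id v)"

definition overlap :: "bool list \<Rightarrow> bool list \<Rightarrow> nat" where
  "overlap u v = length (filter id (map2 (\<and>) u v))"

lemma dot_eq_odd_overlap: "dot u v = odd (overlap u v)"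
  by (simp add: dot_def overlap_def)

lemma overlap_comm: "overlap u v = overlap v u"
  unfolding overlap_def
proof (induction u arbitrary: v)
  case (Cons x u)
  then show ?case by (cases v) auto
qed simp

lemma overlap_self: "overlap v v = weight v"
  unfolding overlap_def weight_def by (induction v) auto

lemma dot_comm: "dot u v = dot v u"
  by (simp add: dot_eq_odd_overlap overlap_comm)

lemma hamming_dist_eq_weight_vadd: "hamming_dist u v = weight (vadd u v)"
  by (simp add: hamming_dist_def weight_def vadd_def)

lemma length_vadd [simp]: "length (vadd u v) = min (length u) (length v)"
  by (simp add: vadd_def)

lemma length_zero_vec [simp]: "length (zero_vec n) = n"
  by (simp add: zero_vec_def)

lemma vadd_comm: "vadd u v = vadd v u"
  unfolding vadd_def
proof (induction u arbitrary: v)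
  case (Cons x u)
  then show ?case by (cases v) auto
qed simp

lemma vadd_zero_vec [simp]: "length v = n \<Longrightarrow> vadd v (zero_vec n) = v"
  unfolding vadd_def zero_vec_def by (induction v arbitrary: n) auto

lemma vadd_self [simp]: "vadd v v = zero_vec (length v)"
  unfolding vadd_def zero_vec_def by (induction v) auto

lemma vadd_cancel_right [simp]: "length u = length v \<Longrightarrow> vadd (vadd u v) v = u"
  unfolding vadd_def by (induction u v rule: list_induct2) auto

lemma vadd_cancel_left [simp]: "length u = length v \<Longrightarrow> vadd u (vadd u v) = v"
  unfolding vadd_def by (induction u v rule: list_induct2) auto

lemma vadd_eq_zero_vec_iff:
  "length u = length v \<Longrightarrow> vadd u v = zero_vec (length u) \<longleftrightarrow> u = v"
  unfolding vadd_def zero_vec_def by (induction u v rule: list_induct2) auto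

lemma dot_zero_vec [simp]: "\<not> dot v (zero_vec n)"
  unfolding dot_def zero_vec_def
proof (induction v arbitrary: n)
  case (Cons x v)
  then show ?case by (cases n) auto
qed simp

lemma dot_vadd:
  "length u = length w \<Longrightarrow> dot v (vadd u w) \<longleftrightarrow> dot v u \<noteq> dot v w"
  unfolding dot_def vadd_def
proof (induction u w arbitrary: v rule: list_induct2)
  case (Cons x u y w)
  then show ?case by (cases v) auto
qed simp

lemma weight_vadd:
  "length u = length v \<Longrightarrow> weight (vadd u v) + 2 * overlap u v = weight u + weight v"
  unfolding weight_def vadd_def overlap_def by (induction u v rule: list_induct2) auto

lemma weight_add_le_length_add_overlap:
  "length u = length v \<Longrightarrow> weight u + weight v \<le> length u + overlap u v"
  unfolding weight_def overlap_def by (induction u v rule: list_induct2) auto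

lemma min_dist_le_weight:
  assumes "linear_code n C" "finite C" "c \<in> C" "c \<noteq> zero_vec n"
  shows "min_dist C \<le> weight c"
proof -
  let ?D = "{hamming_dist u v | u v. u \<in> C \<and> v \<in> C \<and> u \<noteq> v}"
  have "?D \<subseteq> (\<lambda>(u, v). hamming_dist u v) ` (C \<times> C)"
    by auto
  then have "finite ?D"
    using \<open>finite C\<close> by (meson finite_SigmaI finite_imageI finite_subset)
  moreover have "hamming_dist c (zero_vec n) \<in> ?D"
    using assms(1,3,4) unfolding linear_code_def by blast
  ultimately have "min_dist C \<le> hamming_dist c (zero_vec n)"
    unfolding min_dist_def by (rule Min_le)
  moreover have "length c = n"
    using assms(1,3) unfolding linear_code_def by auto
  ultimately show ?thesis
    by (simp add: hamming_dist_eq_weight_vadd)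
qed

definition span2 :: "nat \<Rightarrow> bool list \<Rightarrow> bool list \<Rightarrow> bool list set" where
  "span2 n a b = {zero_vec n, a, b, vadd a b}"

lemma linear_code_span2:
  assumes "length a = n" "length b = n"
  shows "linear_code n (span2 n a b)"
proof -
  have "vadd (vadd a b) a = b" "vadd b (vadd a b) = a"
    using assms vadd_cancel_left vadd_cancel_right vadd_comm by metis+
  then show ?thesis
    using assms unfolding linear_code_def span2_def by (auto simp: vadd_comm)
qed

lemma card_span2:
  assumes "length a = n" "length b = n" "a \<noteq> zero_vec n" "b \<noteq> zero_vec n" "a \<noteq> b"
  shows "card (span2 n a b) = 4"
proof -
  have "vadd a b \<noteq> zero_vec n"
    using assms vadd_eq_zero_vec_iff by metis
  moreover have "vadd a b \<noteq> a" "vadd a b \<noteq> b"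
    using assms vadd_cancel_left vadd_cancel_right vadd_self by metis+
  ultimately show ?thesis
    using assms unfolding span2_def by (simp add: card_insert_if)
qed

lemma code_card_4_eq_span2:
  assumes "linear_code n C" "card C = 4"
  obtains a b where "length a = n" "length b = n"
    "a \<noteq> zero_vec n" "b \<noteq> zero_vec n" "a \<noteq> b" "C = span2 n a b"
proof -
  have "finite C"
    using assms(2) card.infinite by fastforce
  have zero: "zero_vec n \<in> C" and lengths: "C \<subseteq> {v. length v = n}"
    and closed: "\<And>u v. u \<in> C \<Longrightarrow> v \<in> C \<Longrightarrow> vadd u v \<in> C"
    using assms(1) unfolding linear_code_def by auto
  have "card (C - {zero_vec n}) = 3"
    using assms(2) zero \<open>finite C\<close> by simp
  then obtain a where a: "a \<in> C" "a \<noteq> zero_vec n"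
    by (metis Diff_iff card.empty ex_in_conv insert_iff zero_neq_numeral)
  have "card (C - {zero_vec n, a}) = 2"
    using assms(2) zero \<open>finite C\<close> a by (simp add: card_Diff_subset)
  then obtain b where b: "b \<in> C" "b \<noteq> zero_vec n" "b \<noteq> a"
    by (metis Diff_iff card.empty ex_in_conv insert_iff zero_neq_numeral)
  have "length a = n" "length b = n"
    using a b lengths by auto
  have "span2 n a b \<subseteq> C"
    unfolding span2_def using zero a b closed by auto
  then have "C = span2 n a b"
    using card_span2 \<open>length a = n\<close> \<open>length b = n\<close> a b assms(2) \<open>finite C\<close>
    by (metis card_subset_eq)
  with \<open>length a = n\<close> \<open>length b = n\<close> a b show thesis
    using that by blast
qed

lemma dual_code_span2:
  assumes "length a = n" "length b = n"
  shows "v \<in> dual_code n (span2 n a b) \<longleftrightarrow> length v = n \<and> \<not> dot v a \<and> \<not> dot v b"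
  using assms unfolding dual_code_def span2_def by (auto simp: dot_vadd)

text \<open>The Gram matrix of a and b over F_2 has determinant |a| |b| - |a \<inter> b|^2, which is
  congruent to |a| |b| + |a \<inter> b| modulo 2.\<close>

lemma is_LCD_span2_iff:
  assumes "length a = n" "length b = n" "a \<noteq> zero_vec n" "b \<noteq> zero_vec n" "a \<noteq> b"
  shows "is_LCD n (span2 n a b) \<longleftrightarrow> odd (weight a * weight b + overlap a b)"
proof -
  let ?D = "dual_code n (span2 n a b)"
  have "vadd a b \<noteq> zero_vec n"
    using assms vadd_eq_zero_vec_iff by metis
  moreover have "zero_vec n \<in> ?D"
    using assms by (simp add: dual_code_span2 dot_comm[of "zero_vec n"])
  ultimately have "is_LCD n (span2 n a b) \<longleftrightarrow> a \<notin> ?D \<and> b \<notin> ?D \<and> vadd a b \<notin> ?D"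
    using assms(3,4) unfolding is_LCD_def span2_def by blast
  also have "\<dots> \<longleftrightarrow> (dot a a \<or> dot a b) \<and> (dot b a \<or> dot b b)
      \<and> (dot (vadd a b) a \<or> dot (vadd a b) b)"
    using assms by (simp add: dual_code_span2)
  also have "\<dots> \<longleftrightarrow> (odd (weight a) \<or> odd (overlap a b)) \<and> (odd (overlap a b) \<or> odd (weight b))
      \<and> (odd (weight a) \<noteq> odd (overlap a b) \<or> odd (overlap a b) \<noteq> odd (weight b))"
  proof -
    have "dot (vadd a b) v \<longleftrightarrow> dot a v \<noteq> dot b v" for v
      using assms dot_vadd[of a b v] by (simp add: dot_comm[of _ v])
    then show ?thesis
      by (simp add: dot_eq_odd_overlap overlap_self overlap_comm[of b])
  qed
  also have "\<dots> \<longleftrightarrow> odd (weight a * weight b + overlap a b)"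
    by auto
  finally show ?thesis .
qed

lemma even_gram_det_if_weights_ge:
  assumes "length a = 6 * r + 5" "length b = 6 * r + 5"
    and "4 * r + 3 \<le> weight a" "4 * r + 3 \<le> weight b" "4 * r + 3 \<le> weight (vadd a b)"
  shows "even (weight a * weight b + overlap a b)"
proof -
  have sum: "weight (vadd a b) + 2 * overlap a b = weight a + weight b"
    using assms(1,2) weight_vadd by simp
  have cover: "weight a + weight b \<le> 6 * r + 5 + overlap a b"
    using assms(1,2) weight_add_le_length_add_overlap by metis
  obtain i j where i: "weight a = 4 * r + 3 + i" and j: "weight b = 4 * r + 3 + j"
    using assms(3,4) le_Suc_ex by metis
  have "overlap a b = 2 * r + 1 + i + j" and "i + j \<le> 1"
    using sum cover assms(5) i j by presburger+
  then consider "i = 0" "j = 0" "overlap a b = 2 * r + 1"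
    | "i = 1" "j = 0" "overlap a b = 2 * r + 2"
    | "i = 0" "j = 1" "overlap a b = 2 * r + 2"
    by linarith
  then show ?thesis
    by cases (simp_all add: i j)
qed

lemma LCD_min_dist_le:
  assumes "nkd_code (6 * r + 5) 2 d C" "is_LCD (6 * r + 5) C"
  shows "d \<le> 4 * r + 2"
proof (rule ccontr)
  assume "\<not> d \<le> 4 * r + 2"
  have code: "linear_code (6 * r + 5) C" "card C = 4" "min_dist C = d"
    using assms(1) unfolding nkd_code_def by auto
  then have "finite C"
    using card.infinite by fastforce
  obtain a b where ab: "length a = 6 * r + 5" "length b = 6 * r + 5"
    "a \<noteq> zero_vec (6 * r + 5)" "b \<noteq> zero_vec (6 * r + 5)" "a \<noteq> b"
    and C: "C = span2 (6 * r + 5) a b"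
    using code_card_4_eq_span2 code(1,2) by metis
  have "vadd a b \<noteq> zero_vec (6 * r + 5)"
    using ab vadd_eq_zero_vec_iff by metis
  then have "min_dist C \<le> weight c" if "c \<in> {a, b, vadd a b}" for c
    using that min_dist_le_weight[OF code(1) \<open>finite C\<close>] ab(3,4)
    unfolding C span2_def by auto
  moreover have "4 * r + 3 \<le> min_dist C"
    using code(3) \<open>\<not> d \<le> 4 * r + 2\<close> by simp
  ultimately have "even (weight a * weight b + overlap a b)"
    using even_gram_det_if_weights_ge[OF ab(1,2)] by (meson insertCI order_trans)
  then show False
    using assms(2) is_LCD_span2_iff[OF ab] C by simp
qed

lemma LCD_code_dim2_exists:
  assumes "2 \<le> n"
  shows "\<exists>d C. nkd_code n 2 d C \<and> is_LCD n C"
proof -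
  obtain m where n: "n = Suc (Suc m)"
    using assms by (intro that[of "n - 2"]) simp
  define a where "a = True # False # replicate m False"
  define b where "b = False # True # replicate m False"
  have ab: "length a = n" "length b = n" "a \<noteq> zero_vec n" "b \<noteq> zero_vec n" "a \<noteq> b"
    unfolding a_def b_def zero_vec_def n by auto
  have "odd (weight a * weight b + overlap a b)"
    unfolding a_def b_def weight_def overlap_def by (simp add: zip_replicate)
  then have "nkd_code n 2 (min_dist (span2 n a b)) (span2 n a b) \<and> is_LCD n (span2 n a b)"
    using linear_code_span2[OF ab(1,2)] card_span2[OF ab] is_LCD_span2_iff[OF ab]
    unfolding nkd_code_def by simp
  then show ?thesis
    by blast
qed

text \<open>The existence hypothesis is needed: GREATEST of an unsatisfiable predicate is unspecified.\<close>

lemma LCD_max_less: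
  assumes "\<exists>d C. nkd_code n k d C \<and> is_LCD n C"
    and "\<And>d C. nkd_code n k d C \<Longrightarrow> is_LCD n C \<Longrightarrow> d < m"
  shows "LCD_max n k < m"
proof -
  let ?P = "\<lambda>d. \<exists>C. nkd_code n k d C \<and> is_LCD n C"
  have "?P (GREATEST d. ?P d)"
  proof (rule GreatestI_ex_nat)
    show "\<exists>d. ?P d"
      using assms(1) by blast
    show "d \<le> m" if "?P d" for d
      using that assms(2) less_imp_le_nat by blast
  qed
  then show ?thesis
    unfolding LCD_max_def using assms(2) by blast
qed

theorem proposition2p5:
  fixes r :: nat
  shows "LCD_max (6 * r + 5) 2 < 4 * r + 3"
proof (rule LCD_max_less)
  show "\<exists>d C. nkd_code (6 * r + 5) 2 d C \<and> is_LCD (6 * r + 5) C"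
    by (rule LCD_code_dim2_exists) simp
  show "d < 4 * r + 3" if "nkd_code (6 * r + 5) 2 d C" "is_LCD (6 * r + 5) C" for d C
    using LCD_min_dist_le[OF that] by simp
qed

end
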